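(* Let $\sigma>0$, $0\le\delta<\min(1,\sigma)$ and $0<a\le1$. For every integer $t>\tau:=\big(\frac{2(\sigma-\delta)}{a}\big)^{\frac{1}{1-\delta}}$, $$\sum_{s=1}^{t-1}\Big[\frac{1}{s^\sigma}\prod_{k=s+1}^{t-1}\Big(1-\frac{a}{k^\delta}\Big)\Big]\le A(a,\sigma,\delta)\,t^{-(\sigma-\delta)},$$ where $A(a,\sigma,\delta)=2^\sigma\max\{1+\frac2a,\,1+\frac{1}{\sigma-1}(\frac{2(\sigma-\delta)}{a})^{\frac{\sigma-\delta}{1-\delta}}\}$ if $\sigma>1$; $A(a,\sigma,\delta)=2^\sigma\max\{1+\frac2a,\,1+\frac2a\ln(\frac{2(1-\delta)}{a})\}$ if $\sigma=1$; $A(a,\sigma,\delta)=2^\sigma\max\{1+\frac2a,\,1+\frac{2(\sigma-\delta)}{a(1-\sigma)}\}$ if $0<\sigma<1$. Moreover, for $\delta=1$ and $a-\sigma+1\neq0$, $$\sum_{s=1}^{t-1}\Big[\frac{1}{s^\sigma}\prod_{k=s+1}^{t-1}\Big(1-\frac{a}{k}\Big)\Big]\le A(a,\sigma,1)\,t^{-\min(\sigma-1,a)},$$ where $A(a,\sigma,1)=2^\sigma\big(1+\frac{1}{|a-\sigma+1|}\big)$.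
   Context: Empty products equal $1$. In the case $\delta=1$ the same $a\in(0,1]$ and $\sigma>0$ are considered and $t$ ranges over positive integers. *)

theory Defs
  imports Complex_Main
begin

definition weighted_prod_sum :: "real \<Rightarrow> real \<Rightarrow> real \<Rightarrow> nat \<Rightarrow> real" where
  "weighted_prod_sum a \<sigma> \<delta> t =
     (\<Sum>s\<in>{1..<t}. (1 / (real s powr \<sigma>)) *
        (\<Prod>k\<in>{s+1..<t}. (1 - a / (real k powr \<delta>))))"

definition const_A :: "real \<Rightarrow> real \<Rightarrow> real \<Rightarrow> real" where
  "const_A a \<sigma> \<delta> =
     (if \<sigma> > 1 then
        2 powr \<sigma> * max (1 + 2 / a)
          (1 + 1 / (\<sigma> - 1) * (2 * (\<sigma> - \<delta>) / a) powr ((\<sigma> - \<delta>) / (1 - \<delta>)))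
      else if \<sigma> = 1 then
        2 powr \<sigma> * max (1 + 2 / a) (1 + 2 / a * ln (2 * (1 - \<delta>) / a))
      else
        2 powr \<sigma> * max (1 + 2 / a) (1 + 2 * (\<sigma> - \<delta>) / (a * (1 - \<sigma>))))"

definition const_A1 :: "real \<Rightarrow> real \<Rightarrow> real" where
  "const_A1 a \<sigma> = 2 powr \<sigma> * (1 + 1 / \<bar>a - \<sigma> + 1\<bar>)"

end

theory Submission
  imports Defs "HOL-Analysis.Harmonic_Numbers"
begin

text \<open>
  Write S(t) for the sum and p = sigma - delta. Peeling off the last factor gives
  S(t+1) = (1 - a t^-delta) S(t) + t^-sigma. Once t^(1-delta) > 2p/a, i.e. beyond the threshold
  tau, half of the contraction a t^-delta absorbs the new term t^-sigma (this is where
  A >= 1 + 2/a is used), and the other half beats the relative decay p/t of t^-p by the tangent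
  inequality (1 - p/x) x^-p <= (x+1)^-p, so the bound A t^-p propagates by induction. Up to tau
  all factors lie in [0,1], so S(t) is at most a partial sum of s^-sigma; comparing it with the
  integral of x^-sigma (separately for sigma < 1, sigma = 1, sigma > 1) gives the base cases.

  For delta = 1 the same tangent inequality bounds the product by ((s+1)/t)^a, and
  s^-sigma <= 2^sigma (s+1)^-sigma reduces S(t) to 2^sigma t^-a times a sum of (s+1)^(a-sigma),
  which is again compared with an integral.
\<close>

lemma powr_above_tangent:
  fixes q x y :: real
  assumes "q \<le> 0" "0 < x" "0 < y"
  shows "q * x powr (q - 1) * (y - x) \<le> y powr q - x powr q"
proof -
  have deriv: "((\<lambda>x. x powr q) has_real_derivative q * x powr (q - 1)) (at x)" if "0 < x" for x
    using that by (rule has_real_derivative_powr)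
  have "q * u powr (q - 1) \<le> q * v powr (q - 1)" if "0 < u" "u \<le> v" for u v :: real
    using that assms(1) by (intro mult_left_mono_neg powr_mono2') auto
  then have "convex_on {0<..} (\<lambda>x. x powr q)"
    by (intro convex_on_realI[OF _ deriv]) auto
  then show ?thesis
    using assms deriv[OF assms(2)]
    by (intro convex_on_imp_above_tangent[where A = "{0<..}"])
      (auto simp: interior_open has_field_derivative_at_within)
qed

lemma powr_below_tangent:
  fixes q x y :: real
  assumes "0 \<le> q" "q \<le> 1" "0 < x" "0 < y"
  shows "y powr q - x powr q \<le> q * x powr (q - 1) * (y - x)"
proof -
  have deriv: "((\<lambda>x. - (x powr q)) has_real_derivative - (q * x powr (q - 1))) (at x)"
    if "0 < x" for x
    using that by (intro DERIV_minus has_real_derivative_powr)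
  have "- (q * u powr (q - 1)) \<le> - (q * v powr (q - 1))" if "0 < u" "u \<le> v" for u v :: real
    using that assms(1,2) by (auto intro!: mult_left_mono powr_mono2')
  then have "convex_on {0<..} (\<lambda>x. - (x powr q))"
    by (intro convex_on_realI[OF _ deriv]) auto
  then have "- (q * x powr (q - 1)) * (y - x) \<le> - (y powr q) - - (x powr q)"
    using assms deriv[OF assms(3)]
    by (intro convex_on_imp_above_tangent[where A = "{0<..}"])
      (auto simp: interior_open has_field_derivative_at_within)
  then show ?thesis by simp
qed

lemma one_minus_div_mul_powr_le:
  fixes p x :: real
  assumes "0 \<le> p" "0 < x"
  shows "(1 - p / x) * x powr (- p) \<le> (x + 1) powr (- p)"
proof -
  have "- p * x powr (- p - 1) * (x + 1 - x) \<le> (x + 1) powr (- p) - x powr (- p)"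
    using assms by (intro powr_above_tangent) auto
  moreover have "x powr (- p - 1) = x powr (- p) / x"
    using assms by (simp add: powr_diff)
  ultimately show ?thesis by (simp add: algebra_simps)
qed

lemma sum_le_telescope:
  fixes f F :: "nat \<Rightarrow> real"
  assumes "m \<le> n" "\<And>k. m \<le> k \<Longrightarrow> k < n \<Longrightarrow> f k \<le> F (Suc k) - F k"
  shows "sum f {m..<n} \<le> F n - F m"
proof -
  have "sum f {m..<n} \<le> (\<Sum>k = m..<n. F (Suc k) - F k)"
    using assms(2) by (intro sum_mono) auto
  also have "\<dots> = F n - F m"
    using assms(1) by (rule sum_Suc_diff')
  finally show ?thesis .
qed

lemma sum_Suc_powr_le_lt_minus_one:
  fixes e :: real
  assumes "e < -1" "1 \<le> t"
  shows "- (e + 1) * (\<Sum>s\<in>{1..<t}. real (s + 1) powr e) \<le> 1 - real t powr (e + 1)"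
proof -
  have "- (e + 1) * real (k + 1) powr e \<le> real k powr (e + 1) - real (k + 1) powr (e + 1)"
    if "1 \<le> k" for k :: nat
    using powr_above_tangent[of "e + 1" "real (k + 1)" "real k"] assms(1) that
    by (simp add: algebra_simps)
  then show ?thesis
    using sum_le_telescope[of 1 t "\<lambda>s. - (e + 1) * real (s + 1) powr e"
        "\<lambda>k. - (real k powr (e + 1))"] assms(2)
    by (simp add: sum_distrib_left)
qed

lemma sum_Suc_powr_le_nonpos:
  fixes e :: real
  assumes "-1 < e" "e \<le> 0" "1 \<le> t"
  shows "(e + 1) * (\<Sum>s\<in>{1..<t}. real (s + 1) powr e) \<le> real t powr (e + 1) - 1"
proof -
  have "(e + 1) * real (k + 1) powr e \<le> real (k + 1) powr (e + 1) - real k powr (e + 1)"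
    if "1 \<le> k" for k :: nat
    using powr_below_tangent[of "e + 1" "real (k + 1)" "real k"] assms(1,2) that by simp
  then show ?thesis
    using sum_le_telescope[of 1 t "\<lambda>s. (e + 1) * real (s + 1) powr e"
        "\<lambda>k. real k powr (e + 1)"] assms(3)
    by (simp add: sum_distrib_left)
qed

lemma sum_Suc_powr_le_nonneg:
  fixes e :: real
  assumes "0 \<le> e"
  shows "(\<Sum>s\<in>{1..<t}. real (s + 1) powr e) \<le> real t powr (e + 1)"
proof -
  have "(\<Sum>s\<in>{1..<t}. real (s + 1) powr e) \<le> real (card {1..<t}) * real t powr e"
    using assms by (intro sum_bounded_above powr_mono2) auto
  also have "\<dots> \<le> real t * real t powr e"
    by (intro mult_right_mono) auto
  also have "\<dots> = real t powr (e + 1)"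
    by (cases "t = 0") (simp_all add: powr_add)
  finally show ?thesis .
qed

lemma sum_Suc_powr_le:
  fixes e :: real
  assumes "e \<noteq> -1" "1 \<le> t"
  shows "(\<Sum>s\<in>{1..<t}. real (s + 1) powr e) \<le> (1 + 1 / \<bar>e + 1\<bar>) * real t powr max 0 (e + 1)"
proof -
  define S where "S = (\<Sum>s\<in>{1..<t}. real (s + 1) powr e)"
  have "0 \<le> real t powr (e + 1)" by simp
  consider "e < -1" | "-1 < e" "e \<le> 0" | "0 \<le> e"
    using assms(1) by linarith
  then show ?thesis
  proof cases
    case 1
    have "- (e + 1) * S \<le> 1 - real t powr (e + 1)"
      using sum_Suc_powr_le_lt_minus_one[OF 1 assms(2)] unfolding S_def .
    then have "- (e + 1) * S \<le> 1"
      using \<open>0 \<le> real t powr (e + 1)\<close> by linarith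
    then have "S \<le> 1 / \<bar>e + 1\<bar>"
      using 1 by (simp add: field_simps)
    then show ?thesis
      using 1 unfolding S_def by simp
  next
    case 2
    have "(e + 1) * S \<le> real t powr (e + 1)"
      using sum_Suc_powr_le_nonpos[OF 2 assms(2)] unfolding S_def by linarith
    also have "\<dots> \<le> real t powr (e + 1) + (e + 1) * real t powr (e + 1)"
      using 2 by simp
    also have "\<dots> = (e + 1) * ((1 + 1 / (e + 1)) * real t powr (e + 1))"
      using 2 by (simp add: field_simps)
    finally show ?thesis
      using 2 unfolding S_def by simp
  next
    case 3
    have "S \<le> real t powr (e + 1)"
      using sum_Suc_powr_le_nonneg[OF 3] unfolding S_def .
    also have "\<dots> \<le> (1 + 1 / \<bar>e + 1\<bar>) * real t powr (e + 1)"
      using \<open>0 \<le> real t powr (e + 1)\<close> by (simp add: algebra_simps)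
    finally show ?thesis
      using 3 unfolding S_def by simp
  qed
qed

lemma add_one_powr_le_exp:
  fixes p x :: real
  assumes "0 \<le> p" "0 < x"
  shows "(x + 1) powr p \<le> exp (p / x) * x powr p"
proof -
  have "(1 + 1 / x) * x = x + 1"
    using assms(2) by (simp add: distrib_right)
  moreover have "0 < 1 + 1 / x"
    using assms(2) by (simp add: add_pos_pos)
  ultimately have "(x + 1) powr p = (1 + 1 / x) powr p * x powr p"
    using assms(2) by (metis powr_mult less_imp_le)
  also have "(1 + 1 / x) powr p = exp (p * ln (1 + 1 / x))"
    using \<open>0 < 1 + 1 / x\<close> by (simp add: powr_def mult.commute)
  also have "p * ln (1 + 1 / x) \<le> p * (1 / x)"
    using assms by (intro mult_left_mono ln_add_one_self_le_self) auto
  then have "exp (p * ln (1 + 1 / x)) \<le> exp (p / x)"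
    by simp
  finally show ?thesis
    by (simp add: mult_right_mono)
qed

lemma mult_exp_half_le_two_powr:
  fixes \<sigma> :: real
  assumes "0 \<le> \<sigma>"
  shows "\<sigma> * exp (1 / 2) \<le> 2 powr \<sigma>"
proof -
  have "3 / 2 \<le> exp (1 / 2 :: real)"
    using exp_ge_add_one_self[of "1 / 2"] by simp
  then have "exp (1 / 2) \<le> exp 1 * (2 / 3 :: real)"
    using exp_add[of "1 / 2" "1 / 2 :: real"] by (simp add: field_simps)
  also have "\<dots> \<le> exp 1 * ln 2"
    using ln2_ge_two_thirds by simp
  finally have "\<sigma> * exp (1 / 2) \<le> exp 1 * (\<sigma> * ln 2)"
    using assms by (simp add: mult_left_mono mult.left_commute)
  also have "\<dots> \<le> exp 1 * exp (\<sigma> * ln 2 - 1)"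
    using exp_ge_add_one_self[of "\<sigma> * ln 2 - 1"] by simp
  also have "\<dots> = 2 powr \<sigma>"
    by (simp add: powr_def exp_diff mult.commute)
  finally show ?thesis .
qed

lemma add_one_mul_add_one_le_max:
  fixes L X :: real
  assumes "1 \<le> X"
  shows "(1 + L) * (1 + X) \<le> 2 * max (1 + X) (1 + X * L)"
proof (cases "L \<le> 1")
  case True
  then have "(1 + L) * (1 + X) \<le> 2 * (1 + X)"
    using assms by (intro mult_right_mono) auto
  then show ?thesis
    by (rule order_trans) (intro mult_left_mono max.cobounded1; simp)
next
  case False
  have "(1 + L) * (1 + X) = 2 * (1 + X * L) - (X - 1) * (L - 1)"
    by (simp add: algebra_simps)
  also have "\<dots> \<le> 2 * (1 + X * L)"
    using False assms by simp
  finally show ?thesis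
    by (rule order_trans) (intro mult_left_mono max.cobounded2; simp)
qed

section \<open>The case delta = 1\<close>

lemma inverse_powr_le_two_powr:
  fixes \<sigma> :: real
  assumes "0 \<le> \<sigma>" "1 \<le> s"
  shows "1 / real s powr \<sigma> \<le> 2 powr \<sigma> * real (s + 1) powr (- \<sigma>)"
proof -
  have "real (s + 1) powr \<sigma> \<le> (2 * real s) powr \<sigma>"
    using assms by (intro powr_mono2) auto
  also have "\<dots> = 2 powr \<sigma> * real s powr \<sigma>"
    by (simp add: powr_mult)
  finally show ?thesis
    using assms(2) by (simp add: powr_minus_divide field_simps)
qed

lemma prod_one_minus_div_le_powr:
  fixes a :: real
  assumes "0 \<le> a" "a \<le> real (s + 1)" "s + 1 \<le> t"
  shows "(\<Prod>k\<in>{s + 1..<t}. 1 - a / real k) \<le> real (s + 1) powr a * real t powr (- a)"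
  using assms(3)
proof (induction t rule: dec_induct)
  case base
  then show ?case by (simp flip: powr_add)
next
  case (step t)
  have "0 \<le> 1 - a / real t"
    using assms(2) step(1) by (simp add: field_simps)
  have "(\<Prod>k\<in>{s + 1..<Suc t}. 1 - a / real k) = (1 - a / real t) * (\<Prod>k\<in>{s + 1..<t}. 1 - a / real k)"
    using step(1) by (simp add: prod.atLeastLessThan_Suc)
  also have "\<dots> \<le> (1 - a / real t) * (real (s + 1) powr a * real t powr (- a))"
    using step.IH \<open>0 \<le> 1 - a / real t\<close> by (rule mult_left_mono)
  also have "\<dots> = real (s + 1) powr a * ((1 - a / real t) * real t powr (- a))"
    by (simp only: mult_ac)
  also have "\<dots> \<le> real (s + 1) powr a * real (Suc t) powr (- a)"
    using one_minus_div_mul_powr_le[of a "real t"] assms(1) step(1)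
    by (intro mult_left_mono) (auto simp: add.commute)
  finally show ?case .
qed

lemma weighted_prod_sum_one_le:
  fixes a \<sigma> :: real
  assumes "0 \<le> \<sigma>" "0 \<le> a" "a \<le> 2"
  shows "weighted_prod_sum a \<sigma> 1 t
    \<le> 2 powr \<sigma> * real t powr (- a) * (\<Sum>s\<in>{1..<t}. real (s + 1) powr (a - \<sigma>))"
  unfolding weighted_prod_sum_def sum_distrib_left
proof (rule sum_mono)
  fix s assume s: "s \<in> {1..<t}"
  have "1 / real s powr \<sigma> * (\<Prod>k\<in>{s + 1..<t}. 1 - a / real k powr 1)
      \<le> 2 powr \<sigma> * real (s + 1) powr (- \<sigma>) * (real (s + 1) powr a * real t powr (- a))"
    using s assms inverse_powr_le_two_powr[of \<sigma> s] prod_one_minus_div_le_powr[of a s t]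
    by (intro mult_mono) (auto intro: prod_nonneg simp: field_simps)
  also have "\<dots> = 2 powr \<sigma> * real t powr (- a) * real (s + 1) powr (a - \<sigma>)"
    by (simp add: powr_add[symmetric] mult_ac)
  finally show "1 / real s powr \<sigma> * (\<Prod>k\<in>{s + 1..<t}. 1 - a / real k powr 1)
      \<le> 2 powr \<sigma> * real t powr (- a) * real (s + 1) powr (a - \<sigma>)" .
qed

lemma weighted_prod_sum_one_le_const_A1:
  fixes a \<sigma> :: real
  assumes "0 \<le> \<sigma>" "0 \<le> a" "a \<le> 2" "a - \<sigma> + 1 \<noteq> 0" "1 \<le> t"
  shows "weighted_prod_sum a \<sigma> 1 t \<le> const_A1 a \<sigma> * real t powr (- min (\<sigma> - 1) a)"
proof -
  have "weighted_prod_sum a \<sigma> 1 t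
      \<le> 2 powr \<sigma> * real t powr (- a) * (\<Sum>s\<in>{1..<t}. real (s + 1) powr (a - \<sigma>))"
    using assms(1-3) by (rule weighted_prod_sum_one_le)
  also have "\<dots> \<le> 2 powr \<sigma> * real t powr (- a)
      * ((1 + 1 / \<bar>a - \<sigma> + 1\<bar>) * real t powr max 0 (a - \<sigma> + 1))"
    using sum_Suc_powr_le[of "a - \<sigma>" t] assms(4,5) by (intro mult_left_mono) auto
  also have "\<dots> = const_A1 a \<sigma> * real t powr (- a + max 0 (a - \<sigma> + 1))"
    by (simp add: const_A1_def powr_add[symmetric])
  also have "- a + max 0 (a - \<sigma> + 1) = - min (\<sigma> - 1) a"
    by linarith
  finally show ?thesis .
qed

section \<open>The case delta < min 1 sigma\<close>

lemma weighted_prod_sum_Suc: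
  "weighted_prod_sum a \<sigma> \<delta> (Suc t)
    = (1 - a / real t powr \<delta>) * weighted_prod_sum a \<sigma> \<delta> t + 1 / real t powr \<sigma>"
proof (cases "t = 0")
  case True
  \<comment> \<open>both sides vanish, as x / 0 = 0 and 0 powr \<sigma> = 0\<close>
  then show ?thesis by (simp add: weighted_prod_sum_def)
next
  case False
  have "(\<Prod>k\<in>{s + 1..<Suc t}. 1 - a / real k powr \<delta>)
      = (1 - a / real t powr \<delta>) * (\<Prod>k\<in>{s + 1..<t}. 1 - a / real k powr \<delta>)"
    if "s \<in> {1..<t}" for s
    using that by (simp add: prod.atLeastLessThan_Suc)
  then show ?thesis
    using False by (simp add: weighted_prod_sum_def sum.atLeastLessThan_Suc sum_distrib_left mult_ac)
qed

lemma weighted_prod_sum_le_sum_inverse_powr: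
  fixes a \<delta> :: real
  assumes "0 \<le> a" "a \<le> 1" "0 \<le> \<delta>"
  shows "weighted_prod_sum a \<sigma> \<delta> t \<le> (\<Sum>s\<in>{1..<t}. 1 / real s powr \<sigma>)"
  unfolding weighted_prod_sum_def
proof (intro sum_mono mult_left_le prod_le_1 conjI)
  fix s k assume "s \<in> {1..<t}" "k \<in> {s + 1..<t}"
  then have "1 \<le> real k powr \<delta>"
    using assms(3) by (simp add: ge_one_powr_ge_zero)
  then show "0 \<le> 1 - a / real k powr \<delta>" "1 - a / real k powr \<delta> \<le> 1"
    using assms(1,2) by (simp_all add: divide_le_eq)
qed simp

lemma weighted_prod_sum_Suc_le:
  fixes a \<sigma> \<delta> C :: real
  assumes "0 < a" "a \<le> 1" "0 \<le> \<delta>" "\<delta> \<le> \<sigma>" "2 \<le> a * C" "1 \<le> n"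
    and n_large: "2 * (\<sigma> - \<delta>) / a < real n powr (1 - \<delta>)"
    and bound: "weighted_prod_sum a \<sigma> \<delta> n \<le> C * real n powr (- (\<sigma> - \<delta>))"
  shows "weighted_prod_sum a \<sigma> \<delta> (Suc n) \<le> C * real (Suc n) powr (- (\<sigma> - \<delta>))"
proof -
  define p x where "p = \<sigma> - \<delta>" and "x = real n"
  define y z where "y = x powr (- \<delta>)" and "z = x powr (- p)"
  have "0 < x"
    using assms(6) unfolding x_def by simp
  have "0 < C"
    using assms(1,5) zero_less_mult_pos[of a C] by linarith
  have "0 \<le> y" "0 \<le> z"
    unfolding y_def z_def by simp_all
  have "y \<le> 1"
    using assms(3,6) unfolding y_def x_def by (simp add: powr_minus_divide ge_one_powr_ge_zero)
  have x_div: "a / x powr \<delta> = a * y"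
    unfolding y_def by (simp add: powr_minus_divide)
  have x_\<sigma>: "x powr (- \<sigma>) = y * z"
    unfolding y_def z_def p_def by (simp add: powr_add[symmetric])
  have "p \<le> a / 2 * x powr (1 - \<delta>)"
    using n_large assms(1) unfolding p_def x_def by (simp add: field_simps)
  also have "x powr (1 - \<delta>) = x * y"
    using \<open>0 < x\<close> unfolding y_def by (simp add: powr_diff powr_minus_divide)
  finally have "p / x \<le> a / 2 * y"
    using \<open>0 < x\<close> by (simp add: field_simps)
  moreover have "2 * y \<le> a * C * y"
    using assms(5) \<open>0 \<le> y\<close> by (rule mult_right_mono)
  then have "y / C \<le> a / 2 * y"
    using \<open>0 < C\<close> by (simp add: field_simps)
  ultimately have key: "1 - a * y + y / C \<le> 1 - p / x"
    by linarith
  have "weighted_prod_sum a \<sigma> \<delta> (Suc n) = (1 - a * y) * weighted_prod_sum a \<sigma> \<delta> n + y * z"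
    using x_div x_\<sigma> unfolding x_def by (simp add: weighted_prod_sum_Suc powr_minus_divide)
  also have "\<dots> \<le> (1 - a * y) * (C * z) + y * z"
    using bound \<open>y \<le> 1\<close> assms(2) \<open>0 \<le> y\<close> unfolding p_def x_def z_def
    by (intro add_right_mono mult_left_mono) (auto intro: mult_le_one)
  also have "\<dots> = C * ((1 - a * y + y / C) * z)"
    using \<open>0 < C\<close> by (simp add: field_simps)
  also have "\<dots> \<le> C * ((1 - p / x) * z)"
    using key \<open>0 < C\<close> \<open>0 \<le> z\<close> by (intro mult_left_mono mult_right_mono) auto
  also have "\<dots> \<le> C * real (Suc n) powr (- p)"
    using one_minus_div_mul_powr_le[of p x] assms(4) \<open>0 < x\<close> \<open>0 < C\<close>
    unfolding p_def x_def z_def by (intro mult_left_mono) (auto simp: add.commute)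
  finally show ?thesis unfolding p_def .
qed

lemma sum_inverse_powr_eq:
  fixes \<sigma> :: real
  assumes "1 \<le> n"
  shows "(\<Sum>s\<in>{1..<Suc n}. 1 / real s powr \<sigma>) = 1 + (\<Sum>s\<in>{1..<n}. real (s + 1) powr (- \<sigma>))"
proof -
  have "(\<Sum>s\<in>{1..<Suc n}. 1 / real s powr \<sigma>) = 1 + (\<Sum>s\<in>{Suc 1..<Suc n}. 1 / real s powr \<sigma>)"
    using assms by (subst sum.atLeast_Suc_lessThan) auto
  also have "(\<Sum>s\<in>{Suc 1..<Suc n}. 1 / real s powr \<sigma>) = (\<Sum>s\<in>{1..<n}. real (s + 1) powr (- \<sigma>))"
    by (simp only: sum.atLeast_Suc_lessThan_Suc_shift) (simp add: powr_minus_divide)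
  finally show ?thesis .
qed

lemma sum_inverse_powr_le_gt_one:
  fixes \<sigma> :: real
  assumes "1 < \<sigma>" "1 \<le> n"
  shows "(\<sigma> - 1) * (\<Sum>s\<in>{1..<Suc n}. 1 / real s powr \<sigma>) \<le> \<sigma>"
proof -
  have "(\<sigma> - 1) * (\<Sum>s\<in>{1..<n}. real (s + 1) powr (- \<sigma>)) \<le> 1 - real n powr (1 - \<sigma>)"
    using sum_Suc_powr_le_lt_minus_one[of "- \<sigma>" n] assms by simp
  then show ?thesis
    using powr_ge_zero[of "real n" "1 - \<sigma>"]
    unfolding sum_inverse_powr_eq[OF assms(2)] distrib_left mult_1_right by linarith
qed

lemma sum_inverse_powr_le_lt_one:
  fixes \<sigma> :: real
  assumes "0 \<le> \<sigma>" "\<sigma> < 1" "1 \<le> n"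
  shows "(1 - \<sigma>) * (\<Sum>s\<in>{1..<Suc n}. 1 / real s powr \<sigma>) \<le> real n powr (1 - \<sigma>)"
proof -
  have "(1 - \<sigma>) * (\<Sum>s\<in>{1..<n}. real (s + 1) powr (- \<sigma>)) \<le> real n powr (1 - \<sigma>) - 1"
    using sum_Suc_powr_le_nonpos[of "- \<sigma>" n] assms by simp
  then show ?thesis
    using assms(1) unfolding sum_inverse_powr_eq[OF assms(3)] distrib_left mult_1_right by linarith
qed

lemma sum_inverse_powr_one_le:
  assumes "1 \<le> n"
  shows "(\<Sum>s\<in>{1..<Suc n}. 1 / real s powr 1) \<le> 1 + ln (real n)"
proof -
  have "(\<Sum>s\<in>{1..<Suc n}. 1 / real s powr 1) = harm n"
    by (simp add: harm_def atLeastLessThanSuc_atLeastAtMost divide_inverse)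
  also have "\<dots> \<le> 1 + ln (real n)"
    using euler_mascheroni_sequence_decreasing[of 1 n] assms by (simp add: harm_def)
  finally show ?thesis .
qed

lemma threshold_powr:
  fixes a \<sigma> \<delta> :: real
  assumes "0 < a" "\<delta> < 1" "\<delta> \<le> \<sigma>"
  shows "((2 * (\<sigma> - \<delta>) / a) powr (1 / (1 - \<delta>))) powr (1 - \<delta>) = 2 * (\<sigma> - \<delta>) / a"
  using assms by (simp add: powr_powr)

lemma le_threshold_iff:
  fixes a \<sigma> \<delta> x :: real
  assumes "0 < a" "\<delta> < 1" "\<delta> \<le> \<sigma>" "0 \<le> x"
  shows "x \<le> (2 * (\<sigma> - \<delta>) / a) powr (1 / (1 - \<delta>)) \<longleftrightarrow> x powr (1 - \<delta>) \<le> 2 * (\<sigma> - \<delta>) / a"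
proof -
  define \<tau> where "\<tau> = (2 * (\<sigma> - \<delta>) / a) powr (1 / (1 - \<delta>))"
  have "x \<le> \<tau> \<longleftrightarrow> x powr (1 - \<delta>) \<le> \<tau> powr (1 - \<delta>)"
    using assms(2,4) powr_less_mono2[of "1 - \<delta>" \<tau> x] powr_mono2[of "1 - \<delta>" x \<tau>]
    unfolding \<tau>_def by (auto simp: not_le[symmetric])
  then show ?thesis
    using threshold_powr[OF assms(1-3)] unfolding \<tau>_def by simp
qed

lemma sum_inverse_powr_mul_le_lt_one:
  fixes a \<sigma> \<delta> :: real
  assumes "0 < a" "0 \<le> \<delta>" "\<delta> \<le> \<sigma>" "\<sigma> < 1" "1 \<le> n"
    and n_small: "real n powr (1 - \<delta>) \<le> 2 * (\<sigma> - \<delta>) / a"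
  shows "(\<Sum>s\<in>{1..<Suc n}. 1 / real s powr \<sigma>) * real (Suc n) powr (\<sigma> - \<delta>)
    \<le> 2 powr \<sigma> * (2 * (\<sigma> - \<delta>) / (a * (1 - \<sigma>)))"
proof -
  define H where "H = (\<Sum>s\<in>{1..<Suc n}. 1 / real s powr \<sigma>)"
  have "H \<le> real n powr (1 - \<sigma>) / (1 - \<sigma>)"
    using sum_inverse_powr_le_lt_one[of \<sigma> n] assms(2-5) unfolding H_def
    by (simp add: pos_le_divide_eq mult.commute)
  moreover have "real (Suc n) powr (\<sigma> - \<delta>) \<le> (2 * real n) powr (\<sigma> - \<delta>)"
    using assms(3,5) by (intro powr_mono2) auto
  ultimately have "H * real (Suc n) powr (\<sigma> - \<delta>)
      \<le> real n powr (1 - \<sigma>) / (1 - \<sigma>) * ((2 * real n) powr (\<sigma> - \<delta>))"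
    using assms(4) unfolding H_def by (intro mult_mono) (auto intro: sum_nonneg)
  also have "\<dots> = 2 powr (\<sigma> - \<delta>) * real n powr (1 - \<delta>) / (1 - \<sigma>)"
    by (simp add: powr_mult powr_add[symmetric])
  also have "\<dots> \<le> 2 powr \<sigma> * (2 * (\<sigma> - \<delta>) / a) / (1 - \<sigma>)"
    using n_small assms(2,4) by (intro divide_right_mono mult_mono) auto
  finally show ?thesis
    unfolding H_def by simp
qed

lemma sum_inverse_powr_one_mul_le:
  fixes a \<delta> :: real
  assumes "0 < a" "a \<le> 1" "0 \<le> \<delta>" "\<delta> < 1" "1 \<le> n"
    and n_small: "real n powr (1 - \<delta>) \<le> 2 * (1 - \<delta>) / a"
  shows "(\<Sum>s\<in>{1..<Suc n}. 1 / real s powr 1) * real (Suc n) powr (1 - \<delta>)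
    \<le> 2 * max (1 + 2 / a) (1 + 2 / a * ln (2 * (1 - \<delta>) / a))"
proof -
  define p X L where "p = 1 - \<delta>" and "X = 2 / a" and "L = ln (2 * (1 - \<delta>) / a)"
  have "0 < p" "p \<le> 1" "2 \<le> X"
    using assms(1-4) unfolding p_def X_def by (simp_all add: field_simps)
  have "real (Suc n) powr p - real n powr p \<le> p * real n powr (p - 1)"
    using powr_below_tangent[of p "real n" "real (Suc n)"] assms(3-5) unfolding p_def by simp
  also have "\<dots> \<le> p"
    using assms(3,5) \<open>0 < p\<close> unfolding p_def
    by (intro mult_left_le) (auto simp: powr_minus_divide ge_one_powr_ge_zero)
  finally have "real (Suc n) powr p \<le> real n powr p + p"
    by simp
  also have "p * X = 2 * (1 - \<delta>) / a"
    unfolding p_def X_def by (simp add: field_simps)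
  then have "real n powr p \<le> p * X"
    using n_small unfolding p_def by simp
  finally have Suc_n: "real (Suc n) powr p \<le> p * (X + 1)"
    by (simp add: algebra_simps)
  have "p * ln (real n) = ln (real n powr p)"
    using assms(5) by (simp add: ln_powr)
  also have "\<dots> \<le> L"
    using n_small assms(5) unfolding L_def p_def by (intro ln_mono) auto
  finally have ln_n: "p * ln (real n) \<le> L" .
  have "(\<Sum>s\<in>{1..<Suc n}. 1 / real s powr 1) * real (Suc n) powr p \<le> (1 + ln (real n)) * (p * (X + 1))"
    using sum_inverse_powr_one_le[OF assms(5)] Suc_n assms(5) by (intro mult_mono) auto
  also have "\<dots> = (p + p * ln (real n)) * (1 + X)"
    by (simp add: algebra_simps)
  also have "\<dots> \<le> (1 + L) * (1 + X)"
    using ln_n \<open>p \<le> 1\<close> \<open>2 \<le> X\<close> by (intro mult_right_mono) auto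
  also have "\<dots> \<le> 2 * max (1 + X) (1 + X * L)"
    using \<open>2 \<le> X\<close> by (intro add_one_mul_add_one_le_max) simp
  finally show ?thesis
    unfolding p_def X_def L_def by (simp add: mult.commute)
qed

lemma sum_inverse_powr_mul_le_gt_one:
  fixes a \<sigma> \<delta> :: real
  assumes "0 < a" "a \<le> 1" "0 \<le> \<delta>" "\<delta> < 1" "1 < \<sigma>" "1 \<le> n"
    and n_small: "real n \<le> (2 * (\<sigma> - \<delta>) / a) powr (1 / (1 - \<delta>))"
  shows "(\<Sum>s\<in>{1..<Suc n}. 1 / real s powr \<sigma>) * real (Suc n) powr (\<sigma> - \<delta>)
    \<le> 2 powr \<sigma> / (\<sigma> - 1) * (2 * (\<sigma> - \<delta>) / a) powr ((\<sigma> - \<delta>) / (1 - \<delta>))"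
proof -
  define p \<tau> where "p = \<sigma> - \<delta>" and "\<tau> = (2 * (\<sigma> - \<delta>) / a) powr (1 / (1 - \<delta>))"
  have "0 < p" "1 \<le> \<tau>"
    using assms(4,5,6) n_small unfolding p_def \<tau>_def by auto
  have "2 * p \<le> 2 * p / a"
    using assms(1,2) \<open>0 < p\<close> by (simp add: le_divide_eq)
  also have "\<dots> = \<tau> powr (1 - \<delta>)"
    using threshold_powr[of a \<delta> \<sigma>] assms(1,4,5) unfolding p_def \<tau>_def by simp
  also have "\<dots> \<le> \<tau>"
    using \<open>1 \<le> \<tau>\<close> assms(3) powr_mono[of "1 - \<delta>" 1 \<tau>] by simp
  finally have "2 * p \<le> \<tau>" .
  have "real (Suc n) powr p \<le> (\<tau> + 1) powr p"
    using n_small \<open>0 < p\<close> unfolding \<tau>_def by (intro powr_mono2) auto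
  also have "\<dots> \<le> exp (p / \<tau>) * \<tau> powr p"
    using \<open>0 < p\<close> \<open>1 \<le> \<tau>\<close> by (intro add_one_powr_le_exp) auto
  also have "\<dots> \<le> exp (1 / 2) * \<tau> powr p"
    using \<open>2 * p \<le> \<tau>\<close> \<open>1 \<le> \<tau>\<close> by (intro mult_right_mono) (auto simp: field_simps)
  finally have Suc_n: "real (Suc n) powr p \<le> exp (1 / 2) * \<tau> powr p" .
  have "(\<Sum>s\<in>{1..<Suc n}. 1 / real s powr \<sigma>) \<le> \<sigma> / (\<sigma> - 1)"
    using sum_inverse_powr_le_gt_one[OF assms(5,6)] assms(5) by (simp add: field_simps)
  then have "(\<Sum>s\<in>{1..<Suc n}. 1 / real s powr \<sigma>) * real (Suc n) powr p
      \<le> \<sigma> / (\<sigma> - 1) * (exp (1 / 2) * \<tau> powr p)"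
    using Suc_n assms(5) by (intro mult_mono) (auto intro: sum_nonneg)
  also have "\<dots> = \<sigma> * exp (1 / 2) / (\<sigma> - 1) * \<tau> powr p"
    by simp
  also have "\<dots> \<le> 2 powr \<sigma> / (\<sigma> - 1) * \<tau> powr p"
    using mult_exp_half_le_two_powr[of \<sigma>] assms(5)
    by (intro mult_right_mono divide_right_mono) auto
  finally show ?thesis
    unfolding p_def \<tau>_def by (simp add: powr_powr)
qed

lemma const_A_ge:
  fixes a \<sigma> \<delta> :: real
  assumes "0 < a" "0 \<le> \<sigma>"
  shows "1 + 2 / a \<le> const_A a \<sigma> \<delta>"
proof -
  have bound: "1 + 2 / a \<le> 2 powr \<sigma> * max (1 + 2 / a) M" for M
  proof -
    have "1 + 2 / a \<le> max (1 + 2 / a) M" "0 \<le> 1 + 2 / a" "1 \<le> 2 powr \<sigma>"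
      using assms by (auto simp: ge_one_powr_ge_zero)
    then show ?thesis
      by (metis max.cobounded1 mult_1 mult_mono order.trans zero_le_one)
  qed
  show ?thesis
    unfolding const_A_def by (simp only: split: if_split) (intro conjI impI bound)
qed

lemma sum_inverse_powr_mul_le_const_A:
  fixes a \<sigma> \<delta> :: real
  assumes "0 < a" "a \<le> 1" "0 \<le> \<delta>" "\<delta> < min 1 \<sigma>" "1 \<le> n"
    and n_small: "real n \<le> (2 * (\<sigma> - \<delta>) / a) powr (1 / (1 - \<delta>))"
  shows "(\<Sum>s\<in>{1..<Suc n}. 1 / real s powr \<sigma>) * real (Suc n) powr (\<sigma> - \<delta>) \<le> const_A a \<sigma> \<delta>"
proof -
  have n_powr_small: "real n powr (1 - \<delta>) \<le> 2 * (\<sigma> - \<delta>) / a"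
    using n_small le_threshold_iff[of a \<delta> \<sigma> "real n"] assms(1,4) by simp
  consider "\<sigma> < 1" | "\<sigma> = 1" | "1 < \<sigma>"
    by linarith
  then show ?thesis
  proof cases
    case 1
    have "(\<Sum>s\<in>{1..<Suc n}. 1 / real s powr \<sigma>) * real (Suc n) powr (\<sigma> - \<delta>)
        \<le> 2 powr \<sigma> * (2 * (\<sigma> - \<delta>) / (a * (1 - \<sigma>)))"
      using assms(4) by (intro sum_inverse_powr_mul_le_lt_one[OF assms(1,3) _ 1 assms(5) n_powr_small]) auto
    also have "\<dots> \<le> 2 powr \<sigma> * max (1 + 2 / a) (1 + 2 * (\<sigma> - \<delta>) / (a * (1 - \<sigma>)))"
      by (intro mult_left_mono) auto
    finally show ?thesis
      using 1 by (simp add: const_A_def)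
  next
    case 2
    then show ?thesis
      using sum_inverse_powr_one_mul_le[OF assms(1-3) _ assms(5)] assms(4) n_powr_small
      by (simp add: const_A_def)
  next
    case 3
    have "(\<Sum>s\<in>{1..<Suc n}. 1 / real s powr \<sigma>) * real (Suc n) powr (\<sigma> - \<delta>)
        \<le> 2 powr \<sigma> * (1 / (\<sigma> - 1) * (2 * (\<sigma> - \<delta>) / a) powr ((\<sigma> - \<delta>) / (1 - \<delta>)))"
      using sum_inverse_powr_mul_le_gt_one[OF assms(1-3) _ 3 assms(5) n_small] assms(4) by simp
    also have "\<dots> \<le> 2 powr \<sigma>
        * max (1 + 2 / a) (1 + 1 / (\<sigma> - 1) * (2 * (\<sigma> - \<delta>) / a) powr ((\<sigma> - \<delta>) / (1 - \<delta>)))"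
      by (intro mult_left_mono) auto
    finally show ?thesis
      using 3 by (simp add: const_A_def)
  qed
qed

lemma weighted_prod_sum_le_const_A:
  fixes a \<sigma> \<delta> :: real
  assumes "0 < a" "a \<le> 1" "0 \<le> \<delta>" "\<delta> < min 1 \<sigma>"
    and "(2 * (\<sigma> - \<delta>) / a) powr (1 / (1 - \<delta>)) < real t"
  shows "weighted_prod_sum a \<sigma> \<delta> t \<le> const_A a \<sigma> \<delta> * real t powr (- (\<sigma> - \<delta>))"
  using assms(5)
proof (induction t)
  case 0
  then show ?case by simp
next
  case (Suc n)
  define \<tau> A where "\<tau> = (2 * (\<sigma> - \<delta>) / a) powr (1 / (1 - \<delta>))" and "A = const_A a \<sigma> \<delta>"
  have "1 + 2 / a \<le> A"
    using const_A_ge[of a \<sigma> \<delta>] assms(1,3,4) unfolding A_def by simp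
  moreover have "0 < 1 + 2 / a"
    using assms(1) by (simp add: add_pos_pos)
  ultimately have "0 \<le> A"
    by linarith
  have "2 \<le> a * A"
    using \<open>1 + 2 / a \<le> A\<close> assms(1) by (simp add: field_simps)
  consider "n = 0" | "1 \<le> n" "\<tau> < real n" | "1 \<le> n" "real n \<le> \<tau>"
    by linarith
  then show ?case
  proof cases
    case 1
    then show ?thesis
      using \<open>0 \<le> A\<close> unfolding A_def by (simp add: weighted_prod_sum_def)
  next
    case 2
    then have "2 * (\<sigma> - \<delta>) / a < real n powr (1 - \<delta>)"
      using le_threshold_iff[of a \<delta> \<sigma> "real n"] assms(1,4) unfolding \<tau>_def by auto
    then show ?thesis
      using weighted_prod_sum_Suc_le[OF assms(1-3) _ \<open>2 \<le> a * A\<close> 2(1)] Suc.IH 2(2) assms(4)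
      unfolding \<tau>_def A_def by simp
  next
    case 3
    have "weighted_prod_sum a \<sigma> \<delta> (Suc n) \<le> (\<Sum>s\<in>{1..<Suc n}. 1 / real s powr \<sigma>)"
      using assms(1-3) by (intro weighted_prod_sum_le_sum_inverse_powr) auto
    also have "\<dots> \<le> A / real (Suc n) powr (\<sigma> - \<delta>)"
      using sum_inverse_powr_mul_le_const_A[OF assms(1-4) 3(1) 3(2)[unfolded \<tau>_def]]
      unfolding A_def
      by (simp add: pos_le_divide_eq)
    finally show ?thesis
      unfolding A_def powr_minus_divide by simp
  qed
qed

theorem lemma6:
  fixes a \<sigma> :: real
  assumes "\<sigma> > 0" and "0 < a" and "a \<le> 1"
  shows "(\<forall>(\<delta>::real) (t::nat). 0 \<le> \<delta> \<and> \<delta> < min 1 \<sigma> \<and>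
            real t > (2 * (\<sigma> - \<delta>) / a) powr (1 / (1 - \<delta>)) \<longrightarrow>
            weighted_prod_sum a \<sigma> \<delta> t \<le> const_A a \<sigma> \<delta> * real t powr (- (\<sigma> - \<delta>)))
       \<and> (a - \<sigma> + 1 \<noteq> 0 \<longrightarrow>
            (\<forall>t::nat. t \<ge> 1 \<longrightarrow>
               weighted_prod_sum a \<sigma> 1 t \<le> const_A1 a \<sigma> * real t powr (- min (\<sigma> - 1) a)))"
  using weighted_prod_sum_le_const_A[OF assms(2,3)]
    weighted_prod_sum_one_le_const_A1[of \<sigma> a] assms
  by auto

end
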